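(* With the notation of the context, for every $\rho\in(-1,1)$, $$e^{-\frac{\eta^2T}{2}}\le\frac{1+\frac{w(\rho)}{2}}{e^{\frac{\eta^2T}{2}}+\frac{w(\rho)}{2}}\le\frac{D}{p}\le1,$$ $$1\le\frac{G}{p}\le1+\frac{w(\rho)e_2}{2\eta^2T+\eta^2Tw(\rho)}\le1+\frac{e_2}{\eta^2T},$$ where $e_2=e^{2\eta^2T}-2(1+\eta^2T)e^{\frac{\eta^2T}{2}}+\eta^2T+1$.
   Context: Fix $T>0$, $r,\nu,\mu\in\mathbb R$, $\eta>0$, $\sigma>0$, $\rho\in(-1,1)$, $s_0>0$, $\lambda>0$, $\gamma>0$; $N$ is a standard Gaussian random variable; $W$ is the Lambert function (inverse of $x\in(-1,\infty)\mapsto xe^x$). Let $\theta(\rho)=\lambda\gamma(1-\rho^2)$, $w(\rho)=W\left(s_0\eta^2Te^{(\nu-\eta\rho\frac{\mu-r}{\sigma}-\frac{\eta^2}{2})T}\theta(\rho)\right)$, $$D=\frac{\lambda e^{-rT}}{\theta(\rho)\eta^2T}w(\rho)\left(1+\frac{w(\rho)}2\right),\qquad G=\frac{\lambda e^{-rT}}{\theta(\rho)}\frac{w(\rho)}{\eta^2T}\left(e^{\frac{\eta^2}{2}T}+\frac{w(\rho)}2\right),$$ and let $p$ be the asking reservation price of $\lambda$ units of the non-traded stock, $$p=-\frac{e^{-rT}}{\gamma(1-\rho^2)}\ln\mathbb E\exp\left(-\theta(\rho)s_0e^{(\nu-\eta\rho\frac{\mu-r}{\sigma}-\frac{\eta^2}{2})T}e^{\eta\sqrt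 TN}\right).$$ *)

theory Defs
  imports "HOL-Probability.Probability"
begin

definition lambertW :: "real \<Rightarrow> real" where
  "lambertW y = (THE x. -1 < x \<and> x * exp x = y)"

end

theory Submission
  imports Defs
begin

(* Let X be standard normal, a = theta s0 m and s = eta sqrt T, so that the price is p = K L with
   L = - ln E exp (- a e^(s X)) and K = e^(-r T) / (gamma (1 - rho^2)), while D and G are K times
   explicit functions of w = W (a s^2).  Shifting the Gaussian by - w / s (Cameron-Martin) and using
   w e^w = a s^2 gives, with t = w / s^2 and Y = e^(s X) - s X - 1 >= 0,
     E exp (- a e^(s X)) = exp (- w^2 / (2 s^2) - t) * E exp (- t Y).
   Jensen's inequality, exp (- t Y) <= 1 and exp (- u) <= 1 - u + u^2 / 2 (u >= 0) squeeze
   ln E exp (- t Y) between - t E Y and min (0, - t E Y + t^2 E Y^2 / 2), where E Y = e^(s^2/2) - 1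
   and E Y^2 = e2.  This yields D <= p <= G <= p + delta D with delta = w e2 / (2 s^2 + s^2 w),
   and the ratio bounds follow by elementary algebra. *)

lemma xexp_strict_mono_on: "strict_mono_on {-1<..} (\<lambda>x::real. x * exp x)"
proof (rule strict_mono_onI)
  fix x y :: real assume "x \<in> {-1<..}" "y \<in> {-1<..}" "x < y"
  show "x * exp x < y * exp y"
  proof (rule DERIV_pos_imp_increasing[OF \<open>x < y\<close>])
    fix z assume "x \<le> z" "z \<le> y"
    have "((\<lambda>x. x * exp x) has_real_derivative (1 + z) * exp z) (at z)"
      by (auto intro!: derivative_eq_intros simp: algebra_simps)
    moreover have "0 < (1 + z) * exp z"
      using \<open>x \<in> {-1<..}\<close> \<open>x \<le> z\<close> by simp
    ultimately show "\<exists>d. ((\<lambda>x. x * exp x) has_real_derivative d) (at z) \<and> 0 < d"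
      by blast
  qed
qed

lemma lambertW_xexp:
  fixes x :: real
  assumes "-1 < x"
  shows "lambertW (x * exp x) = x"
  unfolding lambertW_def
proof (rule the_equality)
  fix y assume y: "-1 < y \<and> y * exp y = x * exp x"
  show "y = x"
    using strict_mono_on_eqD[OF xexp_strict_mono_on y[THEN conjunct2]] y assms by simp
qed (use assms in simp)

lemma lambertW_pos:
  fixes y :: real
  assumes "0 < y"
  shows "0 < lambertW y" and "lambertW y * exp (lambertW y) = y"
proof -
  have "\<exists>x. 0 \<le> x \<and> x \<le> y \<and> x * exp x = y"
  proof (rule IVT)
    show "0 * exp 0 \<le> y" "0 \<le> y" using assms by simp_all
    show "y \<le> y * exp y" using assms by simp
    show "\<forall>x. 0 \<le> x \<and> x \<le> y \<longrightarrow> isCont (\<lambda>x. x * exp x) x" by simp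
  qed
  then obtain x where "0 \<le> x" "x * exp x = y" by blast
  moreover have "lambertW y = x"
    using lambertW_xexp[of x] \<open>0 \<le> x\<close> \<open>x * exp x = y\<close> by simp
  ultimately show "0 < lambertW y" and "lambertW y * exp (lambertW y) = y"
    using assms by (auto simp: order_le_less)
qed

lemma std_normal_density_shift:
  "std_normal_density (x + c) = exp (- c * x - c\<^sup>2 / 2) * std_normal_density x"
proof -
  have "exp (- (x + c)\<^sup>2 / 2) = exp (- c * x - c\<^sup>2 / 2) * exp (- x\<^sup>2 / 2)"
    unfolding mult_exp_exp by (simp add: power2_eq_square field_simps)
  then show ?thesis
    unfolding std_normal_density_def by simp
qed

lemma has_bochner_integral_std_normal_shift:
  fixes g :: "real \<Rightarrow> real"
  shows "has_bochner_integral lborel (\<lambda>x. std_normal_density x * g x) I \<longleftrightarrow>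
    has_bochner_integral lborel
      (\<lambda>x. std_normal_density x * (exp (- c * x - c\<^sup>2 / 2) * g (x + c))) I"
  using lborel_has_bochner_integral_real_affine_iff[where c=1 and t=c and x=I
      and f="\<lambda>x. std_normal_density x * g x"]
  by (simp add: std_normal_density_shift add.commute mult_ac)

lemma std_normal_mgf:
  "has_bochner_integral lborel (\<lambda>x. std_normal_density x * exp (b * x)) (exp (b\<^sup>2 / 2))"
proof -
  have "exp (- b * x - b\<^sup>2 / 2) * exp (b * (x + b)) = exp (b\<^sup>2 / 2)" for x
    by (simp add: mult_exp_exp power2_eq_square algebra_simps)
  moreover have "has_bochner_integral lborel (\<lambda>x. std_normal_density x * exp (b\<^sup>2 / 2)) (1 * exp (b\<^sup>2 / 2))"
    by (intro has_bochner_integral_mult_left) (simp add: has_bochner_integral_iff)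
  ultimately show ?thesis
    by (subst has_bochner_integral_std_normal_shift[where c=b]) simp
qed

lemma std_normal_density_integral: "has_bochner_integral lborel std_normal_density 1"
  by (simp add: has_bochner_integral_iff)

lemma std_normal_x_exp_integral:
  "has_bochner_integral lborel (\<lambda>x. std_normal_density x * (x * exp (b * x))) (b * exp (b\<^sup>2 / 2))"
proof -
  have "exp (- b * x - b\<^sup>2 / 2) * exp (b * (x + b)) = exp (b\<^sup>2 / 2)" for x
    by (simp add: mult_exp_exp power2_eq_square algebra_simps)
  then have "exp (- b * x - b\<^sup>2 / 2) * ((x + b) * exp (b * (x + b))) =
      exp (b\<^sup>2 / 2) * (x + b)" for x
    by (metis mult.commute mult.left_commute)
  moreover have "has_bochner_integral lborel
      (\<lambda>x. exp (b\<^sup>2 / 2) * (std_normal_density x * x + b * std_normal_density x))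
      (exp (b\<^sup>2 / 2) * (0 + b * 1))"
    using std_normal_moment_odd[of 0]
    by (intro has_bochner_integral_mult_right has_bochner_integral_add std_normal_density_integral) simp_all
  ultimately show ?thesis
    by (subst has_bochner_integral_std_normal_shift[where c=b]) (simp add: algebra_simps)
qed

lemma std_normal_exp_excess_moments:
  "has_bochner_integral lborel (\<lambda>x. std_normal_density x * (exp (s * x) - s * x - 1))
     (exp (s\<^sup>2 / 2) - 1)"
  "has_bochner_integral lborel (\<lambda>x. std_normal_density x * (exp (s * x) - s * x - 1)\<^sup>2)
     (exp (2 * s\<^sup>2) - 2 * (1 + s\<^sup>2) * exp (s\<^sup>2 / 2) + s\<^sup>2 + 1)"
proof -
  have X1: "has_bochner_integral lborel (\<lambda>x. std_normal_density x * x) 0"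
    using std_normal_moment_odd[of 0] by simp
  have X2: "has_bochner_integral lborel (\<lambda>x. std_normal_density x * x\<^sup>2) 1"
    using std_normal_moment_even[of 1] by simp
  have "has_bochner_integral lborel
      (\<lambda>x. std_normal_density x * exp (s * x) - s * (std_normal_density x * x) - std_normal_density x)
      (exp (s\<^sup>2 / 2) - s * 0 - 1)"
    by (intro has_bochner_integral_diff has_bochner_integral_mult_right
        std_normal_mgf X1 std_normal_density_integral)
  then show "has_bochner_integral lborel (\<lambda>x. std_normal_density x * (exp (s * x) - s * x - 1))
     (exp (s\<^sup>2 / 2) - 1)"
    by (simp add: algebra_simps)
  have "has_bochner_integral lborel
      (\<lambda>x. std_normal_density x * exp ((2 * s) * x) - (2 * s) * (std_normal_density x * (x * exp (s * x)))
        - 2 * (std_normal_density x * exp (s * x)) + s\<^sup>2 * (std_normal_density x * x\<^sup>2)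
        + (2 * s) * (std_normal_density x * x) + std_normal_density x)
      (exp ((2 * s)\<^sup>2 / 2) - (2 * s) * (s * exp (s\<^sup>2 / 2)) - 2 * exp (s\<^sup>2 / 2) + s\<^sup>2 * 1
        + (2 * s) * 0 + 1)"
    by (intro has_bochner_integral_add has_bochner_integral_diff has_bochner_integral_mult_right
        std_normal_mgf std_normal_x_exp_integral X1 X2 std_normal_density_integral)
  moreover have "(exp (s * x) - s * x - 1)\<^sup>2 = exp ((2 * s) * x) - (2 * s) * (x * exp (s * x))
      - 2 * exp (s * x) + s\<^sup>2 * x\<^sup>2 + (2 * s) * x + 1" for x
    by (simp add: power2_eq_square mult_exp_exp algebra_simps)
  ultimately show "has_bochner_integral lborel (\<lambda>x. std_normal_density x * (exp (s * x) - s * x - 1)\<^sup>2)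
     (exp (2 * s\<^sup>2) - 2 * (1 + s\<^sup>2) * exp (s\<^sup>2 / 2) + s\<^sup>2 + 1)"
    by (simp add: power2_eq_square algebra_simps)
qed

lemma distributed_has_bochner_integral_iff:
  assumes "distributed M N X f" "g \<in> borel_measurable N" "\<And>x. x \<in> space N \<Longrightarrow> 0 \<le> f x"
  shows "has_bochner_integral N (\<lambda>x. f x * g x) I \<longleftrightarrow> has_bochner_integral M (\<lambda>\<omega>. g (X \<omega>)) I"
  using distributed_integral[OF assms] distributed_integrable[OF assms]
  by (auto simp: has_bochner_integral_iff)

lemma exp_neg_le_quadratic:
  fixes u :: real
  assumes "0 \<le> u"
  shows "exp (- u) \<le> 1 - u + u\<^sup>2 / 2"
proof -
  let ?f = "\<lambda>u::real. 1 - u + u\<^sup>2 / 2 - exp (- u)"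
  have "?f 0 \<le> ?f u"
  proof (rule DERIV_nonneg_imp_increasing_open[OF assms])
    fix x :: real
    have "(?f has_real_derivative (x - 1 + exp (- x))) (at x)"
      by (auto intro!: derivative_eq_intros simp: power2_eq_square algebra_simps)
    moreover have "0 \<le> x - 1 + exp (- x)"
      using exp_ge_add_one_self[of "- x"] by linarith
    ultimately show "\<exists>y. (?f has_real_derivative y) (at x) \<and> 0 \<le> y" by blast
  qed (auto intro!: continuous_intros)
  then show ?thesis by simp
qed

context prob_space
begin

lemma exp_expectation_le:
  fixes Y :: "'a \<Rightarrow> real"
  assumes "integrable M Y" "integrable M (\<lambda>\<omega>. exp (Y \<omega>))"
  shows "exp (expectation Y) \<le> expectation (\<lambda>\<omega>. exp (Y \<omega>))"
proof -
  let ?m = "expectation Y"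
  have "exp ?m = expectation (\<lambda>\<omega>. exp ?m * (1 + (Y \<omega> - ?m)))"
    using assms(1) prob_space by (simp add: algebra_simps)
  also have "\<dots> \<le> expectation (\<lambda>\<omega>. exp (Y \<omega>))"
  proof (rule integral_mono)
    fix \<omega>
    have "exp ?m * (1 + (Y \<omega> - ?m)) \<le> exp ?m * exp (Y \<omega> - ?m)"
      by (intro mult_left_mono exp_ge_add_one_self) simp
    then show "exp ?m * (1 + (Y \<omega> - ?m)) \<le> exp (Y \<omega>)"
      by (simp add: exp_diff)
  qed (use assms in auto)
  finally show ?thesis .
qed

lemma expectation_exp_neg_le_quadratic:
  fixes Y :: "'a \<Rightarrow> real"
  assumes "AE \<omega> in M. 0 \<le> Y \<omega>" "integrable M Y" "integrable M (\<lambda>\<omega>. (Y \<omega>)\<^sup>2)" "0 \<le> t"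
  shows "expectation (\<lambda>\<omega>. exp (- t * Y \<omega>)) \<le> 1 - t * expectation Y + t\<^sup>2 / 2 * expectation (\<lambda>\<omega>. (Y \<omega>)\<^sup>2)"
proof -
  have "expectation (\<lambda>\<omega>. exp (- t * Y \<omega>)) \<le> expectation (\<lambda>\<omega>. 1 - t * Y \<omega> + t\<^sup>2 / 2 * (Y \<omega>)\<^sup>2)"
  proof (rule integral_mono_AE')
    have "exp (- t * y) \<le> 1 - t * y + t\<^sup>2 / 2 * y\<^sup>2" if "0 \<le> y" for y
      using exp_neg_le_quadratic[of "t * y"] that \<open>0 \<le> t\<close> by (simp add: power_mult_distrib)
    with assms(1) show "AE \<omega> in M. exp (- t * Y \<omega>) \<le> 1 - t * Y \<omega> + t\<^sup>2 / 2 * (Y \<omega>)\<^sup>2"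
      by auto
    have "0 \<le> 1 - u + u\<^sup>2 / 2" for u :: real
    proof -
      have "0 \<le> ((1 - u)\<^sup>2 + 1) / 2" by simp
      also have "\<dots> = 1 - u + u\<^sup>2 / 2" by (simp add: power2_eq_square field_simps)
      finally show ?thesis .
    qed
    from this[of "t * Y _"] show "AE \<omega> in M. 0 \<le> 1 - t * Y \<omega> + t\<^sup>2 / 2 * (Y \<omega>)\<^sup>2"
      by (simp add: power_mult_distrib)
  qed (use assms in auto)
  also have "\<dots> = 1 - t * expectation Y + t\<^sup>2 / 2 * expectation (\<lambda>\<omega>. (Y \<omega>)\<^sup>2)"
    using assms prob_space by simp
  finally show ?thesis .
qed

lemma ln_expectation_exp_neg_bounds:
  fixes Y :: "'a \<Rightarrow> real"
  assumes Y: "AE \<omega> in M. 0 \<le> Y \<omega>" "integrable M Y" "integrable M (\<lambda>\<omega>. (Y \<omega>)\<^sup>2)" and "0 \<le> t"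
  shows "0 < expectation (\<lambda>\<omega>. exp (- t * Y \<omega>))"
    and "- t * expectation Y \<le> ln (expectation (\<lambda>\<omega>. exp (- t * Y \<omega>)))"
    and "ln (expectation (\<lambda>\<omega>. exp (- t * Y \<omega>))) \<le> 0"
    and "ln (expectation (\<lambda>\<omega>. exp (- t * Y \<omega>))) \<le>
      - t * expectation Y + t\<^sup>2 / 2 * expectation (\<lambda>\<omega>. (Y \<omega>)\<^sup>2)"
proof -
  define I where "I = expectation (\<lambda>\<omega>. exp (- t * Y \<omega>))"
  have "integrable M (\<lambda>\<omega>. exp (- t * Y \<omega>))"
  proof (rule integrable_const_bound[where B=1])
    have "norm (exp (- t * y)) \<le> 1" if "0 \<le> y" for y
      using that \<open>0 \<le> t\<close> by simp
    with Y(1) show "AE \<omega> in M. norm (exp (- t * Y \<omega>)) \<le> 1"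
      by auto
    show "(\<lambda>\<omega>. exp (- t * Y \<omega>)) \<in> borel_measurable M"
      using borel_measurable_integrable[OF Y(2)] by measurable
  qed
  then have lower: "exp (- t * expectation Y) \<le> I"
    using exp_expectation_le[of "\<lambda>\<omega>. - t * Y \<omega>"] Y(2) by (simp add: I_def)
  then have "0 < I"
    by (meson exp_gt_zero less_le_trans)
  with lower have "- t * expectation Y \<le> ln I"
    by (simp add: ln_ge_iff)
  moreover have "I \<le> expectation (\<lambda>_. 1)"
    unfolding I_def using Y(1) \<open>0 \<le> t\<close> by (intro integral_mono_AE') auto
  then have "I \<le> 1"
    using prob_space by simp
  moreover have "I \<le> 1 - t * expectation Y + t\<^sup>2 / 2 * expectation (\<lambda>\<omega>. (Y \<omega>)\<^sup>2)"
    using expectation_exp_neg_le_quadratic[OF Y \<open>0 \<le> t\<close>] by (simp add: I_def)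
  ultimately show "0 < I" and "- t * expectation Y \<le> ln I" and "ln I \<le> 0"
    and "ln I \<le> - t * expectation Y + t\<^sup>2 / 2 * expectation (\<lambda>\<omega>. (Y \<omega>)\<^sup>2)"
    using ln_le_minus_one[of I] \<open>0 < I\<close> by auto
qed

lemma lognormal_laplace_tilt:
  fixes X :: "'a \<Rightarrow> real" and a s w :: real
  assumes X: "distributed M lborel X std_normal_density"
    and "0 < s" "0 \<le> w" and w: "w * exp w = a * s\<^sup>2"
  defines "t \<equiv> w / s\<^sup>2"
  shows "expectation (\<lambda>\<omega>. exp (- a * exp (s * X \<omega>))) =
    exp (- (w\<^sup>2 / (2 * s\<^sup>2) + t)) * expectation (\<lambda>\<omega>. exp (- t * (exp (s * X \<omega>) - s * X \<omega> - 1)))"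
proof -
  note [measurable] = distributed_measurable[OF X, unfolded measurable_lborel1]
  define c where "c = exp (- (w\<^sup>2 / (2 * s\<^sup>2) + t))"
  define I where "I = expectation (\<lambda>\<omega>. exp (- t * (exp (s * X \<omega>) - s * X \<omega> - 1)))"
  have "integrable M (\<lambda>\<omega>. exp (- t * (exp (s * X \<omega>) - s * X \<omega> - 1)))"
  proof (rule integrable_const_bound[where B=1])
    have "0 \<le> t" using \<open>0 \<le> w\<close> by (simp add: t_def)
    moreover have "0 \<le> exp y - y - 1" for y :: real
      using exp_ge_add_one_self[of y] by linarith
    ultimately show "AE \<omega> in M. norm (exp (- t * (exp (s * X \<omega>) - s * X \<omega> - 1))) \<le> 1"
      by simp
  qed measurable
  then have "has_bochner_integral lborel
      (\<lambda>x. std_normal_density x * exp (- t * (exp (s * x) - s * x - 1))) I"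
    by (subst distributed_has_bochner_integral_iff[OF X])
      (simp_all add: I_def has_bochner_integral_iff)
  note tilted = has_bochner_integral_mult_right[OF this, of c]
  have shifted: "c * exp (- t * (exp (s * x) - s * x - 1)) =
      exp (- (- w / s) * x - (- w / s)\<^sup>2 / 2) * exp (- a * exp (s * (x + - w / s)))" for x
  proof -
    have "s * (x + - w / s) = s * x - w"
      using \<open>0 < s\<close> by (simp add: field_simps)
    moreover have "a = w * exp w / s\<^sup>2"
      using w \<open>0 < s\<close> by (simp add: field_simps)
    ultimately have "a * exp (s * (x + - w / s)) = t * exp (s * x)"
      by (simp add: t_def exp_diff field_simps)
    moreover have "- (- w / s) * x - (- w / s)\<^sup>2 / 2 = t * s * x - w\<^sup>2 / (2 * s\<^sup>2)"
      using \<open>0 < s\<close> by (simp add: t_def power2_eq_square field_simps)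
    ultimately show ?thesis
      unfolding c_def mult_exp_exp by (simp add: algebra_simps)
  qed
  have "has_bochner_integral lborel (\<lambda>x. std_normal_density x * exp (- a * exp (s * x))) (c * I)"
    using tilted by (subst has_bochner_integral_std_normal_shift[where c="- w / s"])
      (unfold shifted[symmetric], simp only: ac_simps)
  then show ?thesis
    by (subst (asm) distributed_has_bochner_integral_iff[OF X])
      (simp_all add: c_def I_def has_bochner_integral_iff)
qed

lemma neg_ln_lognormal_laplace_bounds:
  fixes X :: "'a \<Rightarrow> real" and a s :: real
  assumes X: "distributed M lborel X std_normal_density" and "0 < a" "0 < s"
  defines "w \<equiv> lambertW (a * s\<^sup>2)"
    and "L \<equiv> - ln (expectation (\<lambda>\<omega>. exp (- a * exp (s * X \<omega>))))"
    and "e\<^sub>2 \<equiv> exp (2 * s\<^sup>2) - 2 * (1 + s\<^sup>2) * exp (s\<^sup>2 / 2) + s\<^sup>2 + 1"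
  shows "w / s\<^sup>2 * (1 + w / 2) \<le> L"
    and "L \<le> w / s\<^sup>2 * (exp (s\<^sup>2 / 2) + w / 2)"
    and "w / s\<^sup>2 * (exp (s\<^sup>2 / 2) + w / 2) - L \<le> (w / s\<^sup>2)\<^sup>2 / 2 * e\<^sub>2"
proof -
  define t where "t = w / s\<^sup>2"
  define Y where "Y = (\<lambda>\<omega>. exp (s * X \<omega>) - s * X \<omega> - 1)"
  define I where "I = expectation (\<lambda>\<omega>. exp (- t * Y \<omega>))"
  have "0 < w" and w: "w * exp w = a * s\<^sup>2"
    using lambertW_pos[of "a * s\<^sup>2"] \<open>0 < a\<close> \<open>0 < s\<close> by (simp_all add: w_def)
  have "0 < t" using \<open>0 < w\<close> \<open>0 < s\<close> by (simp add: t_def)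
  have Y_nonneg: "0 \<le> Y \<omega>" for \<omega>
    using exp_ge_add_one_self[of "s * X \<omega>"] unfolding Y_def by linarith
  have EY: "has_bochner_integral M Y (exp (s\<^sup>2 / 2) - 1)"
    using std_normal_exp_excess_moments(1)[of s]
    by (subst (asm) distributed_has_bochner_integral_iff[OF X]) (simp_all add: Y_def)
  have EY2: "has_bochner_integral M (\<lambda>\<omega>. (Y \<omega>)\<^sup>2) e\<^sub>2"
    using std_normal_exp_excess_moments(2)[of s]
    by (subst (asm) distributed_has_bochner_integral_iff[OF X]) (simp_all add: Y_def e\<^sub>2_def)
  have "AE \<omega> in M. 0 \<le> Y \<omega>"
    using Y_nonneg by simp
  note ln_I = ln_expectation_exp_neg_bounds[OF this integrable.intros[OF EY]
      integrable.intros[OF EY2] less_imp_le[OF \<open>0 < t\<close>],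
      unfolded has_bochner_integral_integral_eq[OF EY] has_bochner_integral_integral_eq[OF EY2]
      I_def[symmetric]]
  moreover have "L = w\<^sup>2 / (2 * s\<^sup>2) + t - ln I"
    using lognormal_laplace_tilt[OF X \<open>0 < s\<close> _ w] \<open>0 < w\<close> ln_I(1)
    by (simp add: L_def I_def Y_def t_def ln_mult)
  moreover have "w / s\<^sup>2 * (1 + w / 2) = w\<^sup>2 / (2 * s\<^sup>2) + t"
    and "w / s\<^sup>2 * (exp (s\<^sup>2 / 2) + w / 2) = w\<^sup>2 / (2 * s\<^sup>2) + t + t * (exp (s\<^sup>2 / 2) - 1)"
    and "(w / s\<^sup>2)\<^sup>2 / 2 * e\<^sub>2 = t\<^sup>2 / 2 * e\<^sub>2"
    using \<open>0 < s\<close> by (simp_all add: t_def power2_eq_square field_simps)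
  ultimately show "w / s\<^sup>2 * (1 + w / 2) \<le> L"
    and "L \<le> w / s\<^sup>2 * (exp (s\<^sup>2 / 2) + w / 2)"
    and "w / s\<^sup>2 * (exp (s\<^sup>2 / 2) + w / 2) - L \<le> (w / s\<^sup>2)\<^sup>2 / 2 * e\<^sub>2"
    by linarith+
qed

end

lemma ratio_bounds_of_sandwich:
  fixes D G p \<delta> :: real
  assumes "0 < D" "D \<le> p" "p \<le> G" "G \<le> p + \<delta> * D" "0 \<le> \<delta>"
  shows "D / G \<le> D / p" and "D / p \<le> 1" and "1 \<le> G / p" and "G / p \<le> 1 + \<delta>"
proof -
  have "0 < p" using assms by linarith
  then show "D / G \<le> D / p" "D / p \<le> 1" "1 \<le> G / p"
    using assms by (simp_all add: divide_left_mono)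
  have "G \<le> (1 + \<delta>) * p"
    using assms mult_left_mono[of D p \<delta>] by (simp add: algebra_simps)
  then show "G / p \<le> 1 + \<delta>"
    using \<open>0 < p\<close> by (simp add: divide_simps)
qed

lemma price_ratio_bounds:
  fixes v w K L D G p :: real
  defines "e\<^sub>2 \<equiv> exp (2 * v) - 2 * (1 + v) * exp (v / 2) + v + 1"
  assumes "0 < v" "0 < w" "0 < K"
    and D: "D = K * (w / v * (1 + w / 2))"
    and G: "G = K * (w / v * (exp (v / 2) + w / 2))"
    and p: "p = K * L"
    and lower: "w / v * (1 + w / 2) \<le> L"
    and upper: "L \<le> w / v * (exp (v / 2) + w / 2)"
    and gap: "w / v * (exp (v / 2) + w / 2) - L \<le> (w / v)\<^sup>2 / 2 * e\<^sub>2"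
  shows "exp (- (v / 2)) \<le> (1 + w / 2) / (exp (v / 2) + w / 2)
      \<and> (1 + w / 2) / (exp (v / 2) + w / 2) \<le> D / p
      \<and> D / p \<le> 1
      \<and> 1 \<le> G / p
      \<and> G / p \<le> 1 + w * e\<^sub>2 / (2 * v + v * w)
      \<and> 1 + w * e\<^sub>2 / (2 * v + v * w) \<le> 1 + e\<^sub>2 / v"
proof -
  define E where "E = exp (v / 2)"
  define \<delta> where "\<delta> = w * e\<^sub>2 / (2 * v + v * w)"
  have "1 \<le> E" using \<open>0 < v\<close> by (simp add: E_def)
  have "0 < D" using \<open>0 < v\<close> \<open>0 < w\<close> \<open>0 < K\<close> by (simp add: D)
  have "D \<le> p" "p \<le> G"
    using mult_left_mono[OF lower, of K] mult_left_mono[OF upper, of K] \<open>0 < K\<close>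
    by (simp_all add: D G p E_def)
  have "0 \<le> (w / v)\<^sup>2 / 2 * e\<^sub>2"
    using upper gap by linarith
  then have "0 \<le> e\<^sub>2"
    using \<open>0 < v\<close> \<open>0 < w\<close> by (simp add: zero_le_mult_iff)
  have \<delta>_eq: "\<delta> = e\<^sub>2 / v * (w / (2 + w))"
    using \<open>0 < v\<close> \<open>0 < w\<close> by (simp add: \<delta>_def field_simps)
  have "0 \<le> \<delta>" "\<delta> \<le> e\<^sub>2 / v"
    using \<open>0 \<le> e\<^sub>2\<close> \<open>0 < v\<close> \<open>0 < w\<close> mult_left_mono[of "w / (2 + w)" 1 "e\<^sub>2 / v"]
    unfolding \<delta>_eq by auto
  have "w / v * (1 + w / 2) * \<delta> = w / v * (e\<^sub>2 / v) * ((1 + w / 2) * (w / (2 + w)))"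
    unfolding \<delta>_eq by (simp only: mult_ac)
  also have "(1 + w / 2) * (w / (2 + w)) = w / 2"
    using \<open>0 < w\<close> by (simp add: field_simps)
  finally have "(w / v)\<^sup>2 / 2 * e\<^sub>2 = w / v * (1 + w / 2) * \<delta>"
    by (simp add: power2_eq_square)
  with gap have "w / v * (E + w / 2) \<le> L + w / v * (1 + w / 2) * \<delta>"
    unfolding E_def by linarith
  then have "G \<le> p + \<delta> * D"
    using mult_left_mono[of _ _ K] \<open>0 < K\<close> by (fastforce simp: D G p E_def algebra_simps)
  note ratios = ratio_bounds_of_sandwich[OF \<open>0 < D\<close> \<open>D \<le> p\<close> \<open>p \<le> G\<close> this \<open>0 \<le> \<delta>\<close>]
  have "E + w / 2 \<le> E * (1 + w / 2)"
    using mult_right_mono[OF \<open>1 \<le> E\<close>, of "w / 2"] \<open>0 < w\<close> by (simp add: algebra_simps)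
  then have "1 / E \<le> (1 + w / 2) / (E + w / 2)"
    using \<open>1 \<le> E\<close> \<open>0 < w\<close> by (simp add: divide_simps) (simp add: algebra_simps)
  moreover have "exp (- (v / 2)) = 1 / E"
    by (simp add: E_def exp_minus inverse_eq_divide)
  moreover have "(1 + w / 2) / (E + w / 2) = D / G"
    using \<open>0 < v\<close> \<open>0 < w\<close> \<open>0 < K\<close> by (simp add: D G E_def)
  ultimately show ?thesis
    using ratios \<open>\<delta> \<le> e\<^sub>2 / v\<close> by (simp add: E_def \<delta>_def)
qed

theorem proposition1:
  fixes M :: "'a measure" and N :: "'a \<Rightarrow> real"
    and T r \<nu> \<mu> \<eta> \<sigma> \<rho> s\<^sub>0 lam \<gamma> :: real
  assumes "prob_space M" and "distributed M lborel N std_normal_density"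
    and "T > 0" and "\<eta> > 0" and "\<sigma> > 0" and "-1 < \<rho>" and "\<rho> < 1"
    and "s\<^sub>0 > 0" and "lam > 0" and "\<gamma> > 0"
  shows
    "let \<theta> = lam * \<gamma> * (1 - \<rho>\<^sup>2);
         m = exp ((\<nu> - \<eta> * \<rho> * (\<mu> - r) / \<sigma> - \<eta>\<^sup>2 / 2) * T);
         w = lambertW (s\<^sub>0 * \<eta>\<^sup>2 * T * m * \<theta>);
         D = lam * exp (- r * T) / (\<theta> * \<eta>\<^sup>2 * T) * w * (1 + w / 2);
         G = lam * exp (- r * T) / \<theta> * (w / (\<eta>\<^sup>2 * T)) * (exp (\<eta>\<^sup>2 / 2 * T) + w / 2);
         p = - exp (- r * T) / (\<gamma> * (1 - \<rho>\<^sup>2)) *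
               ln (\<integral>\<omega>. exp (- \<theta> * s\<^sub>0 * m * exp (\<eta> * sqrt T * N \<omega>)) \<partial>M);
         e\<^sub>2 = exp (2 * \<eta>\<^sup>2 * T) - 2 * (1 + \<eta>\<^sup>2 * T) * exp (\<eta>\<^sup>2 * T / 2) + \<eta>\<^sup>2 * T + 1
     in exp (- (\<eta>\<^sup>2 * T / 2)) \<le> (1 + w / 2) / (exp (\<eta>\<^sup>2 * T / 2) + w / 2)
        \<and> (1 + w / 2) / (exp (\<eta>\<^sup>2 * T / 2) + w / 2) \<le> D / p
        \<and> D / p \<le> 1
        \<and> 1 \<le> G / p
        \<and> G / p \<le> 1 + w * e\<^sub>2 / (2 * \<eta>\<^sup>2 * T + \<eta>\<^sup>2 * T * w)
        \<and> 1 + w * e\<^sub>2 / (2 * \<eta>\<^sup>2 * T + \<eta>\<^sup>2 * T * w) \<le> 1 + e\<^sub>2 / (\<eta>\<^sup>2 * T)"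
proof -
  interpret prob_space M by fact
  define \<theta> where "\<theta> = lam * \<gamma> * (1 - \<rho>\<^sup>2)"
  define m where "m = exp ((\<nu> - \<eta> * \<rho> * (\<mu> - r) / \<sigma> - \<eta>\<^sup>2 / 2) * T)"
  define w where "w = lambertW (s\<^sub>0 * \<eta>\<^sup>2 * T * m * \<theta>)"
  define K where "K = lam * exp (- r * T) / \<theta>"
  define L where "L = - ln (\<integral>\<omega>. exp (- \<theta> * s\<^sub>0 * m * exp (\<eta> * sqrt T * N \<omega>)) \<partial>M)"
  have "0 < \<theta>"
    using assms by (simp add: \<theta>_def abs_square_less_1 abs_less_iff)
  have "(\<eta> * sqrt T)\<^sup>2 = \<eta>\<^sup>2 * T" and "\<theta> * s\<^sub>0 * m * (\<eta>\<^sup>2 * T) = s\<^sub>0 * \<eta>\<^sup>2 * T * m * \<theta>"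
    using assms by (simp_all add: power_mult_distrib)
  with neg_ln_lognormal_laplace_bounds[OF assms(2), of "\<theta> * s\<^sub>0 * m" "\<eta> * sqrt T"]
  have bounds: "w / (\<eta>\<^sup>2 * T) * (1 + w / 2) \<le> L"
    "L \<le> w / (\<eta>\<^sup>2 * T) * (exp (\<eta>\<^sup>2 * T / 2) + w / 2)"
    "w / (\<eta>\<^sup>2 * T) * (exp (\<eta>\<^sup>2 * T / 2) + w / 2) - L \<le> (w / (\<eta>\<^sup>2 * T))\<^sup>2 / 2 *
       (exp (2 * (\<eta>\<^sup>2 * T)) - 2 * (1 + \<eta>\<^sup>2 * T) * exp (\<eta>\<^sup>2 * T / 2) + \<eta>\<^sup>2 * T + 1)"
    using assms \<open>0 < \<theta>\<close> by (simp_all add: w_def L_def m_def mult_ac)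
  have "0 < w"
    using lambertW_pos(1) assms \<open>0 < \<theta>\<close> by (simp add: w_def m_def)
  have D_eq: "lam * exp (- r * T) / (\<theta> * \<eta>\<^sup>2 * T) * w * (1 + w / 2) =
      K * (w / (\<eta>\<^sup>2 * T) * (1 + w / 2))"
    and G_eq: "lam * exp (- r * T) / \<theta> * (w / (\<eta>\<^sup>2 * T)) * (exp (\<eta>\<^sup>2 * T / 2) + w / 2) =
      K * (w / (\<eta>\<^sup>2 * T) * (exp (\<eta>\<^sup>2 * T / 2) + w / 2))"
    using \<open>0 < \<theta>\<close> assms by (simp_all add: K_def field_simps)
  have p_eq: "- exp (- r * T) / (\<gamma> * (1 - \<rho>\<^sup>2)) *
      ln (\<integral>\<omega>. exp (- \<theta> * s\<^sub>0 * m * exp (\<eta> * sqrt T * N \<omega>)) \<partial>M) = K * L"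
    using assms by (simp add: K_def L_def \<theta>_def)
  have regroup: "2 * \<eta>\<^sup>2 * T = 2 * (\<eta>\<^sup>2 * T)" "\<eta>\<^sup>2 / 2 * T = \<eta>\<^sup>2 * T / 2"
    by simp_all
  show ?thesis
    unfolding Let_def \<theta>_def[symmetric] m_def[symmetric] w_def[symmetric] regroup
    using \<open>0 < w\<close> \<open>0 < \<theta>\<close> assms
    by (intro price_ratio_bounds[OF _ _ _ D_eq G_eq p_eq bounds]) (simp_all add: K_def)
qed
end
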